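(* Let $1\le d<N$ and draw a random subspace $P$ uniformly with respect to the Haar measure from $G(N-d,N)$, and let $x\in\mathbb{R}^N$ be a randomly chosen vector. Then, with probability $1$, the quantities $$\|Pe_i\|_2^2\ (i\in\{1,\dots,N-1\}),\qquad \|P(e_j+e_k)\|_2^2\ (j\in\{1,\dots,d\},\ k\in\{j+1,\dots,N\}),\qquad \|Px\|_2^2$$ uniquely determine $P$, i.e. $P$ is the only $H\in G(N-d,N)$ for which all of these quantities coincide with the corresponding quantities for $H$.
   Context: $G(m,N)$ denotes the Grassmannian of $m$-dimensional linear subspaces of $\mathbb{R}^N$; for a subspace $H$, $Hy$ denotes the orthogonal projection of $y$ onto $H$. $e_1,\dots,e_N$ are the canonical unit vectors of $\mathbb{R}^N$. The random vector $x$ is understood to be drawn independently of $P$ from a probability distribution absolutely continuous with respect to Lebesgue measure. *)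

theory Defs
  imports "HOL-Analysis.Analysis" "HOL-Probability.Probability"
begin

definition Grass :: "nat \<Rightarrow> (real^'n) set set" where
  "Grass m = {H. subspace H \<and> dim H = m}"

definition oproj :: "(real^'n) set \<Rightarrow> real^'n \<Rightarrow> real^'n" where
  "oproj H y = (THE p. p \<in> H \<and> (\<forall>h\<in>H. (y - p) \<bullet> h = 0))"

text \<open>Matrix of the orthogonal projection onto H; used to topologize the Grassmannian.\<close>
definition projmat :: "(real^'n) set \<Rightarrow> real^'n^'n" where
  "projmat H = (\<chi> i j. oproj H (axis j 1) $ i)"

definition grass_borel :: "nat \<Rightarrow> (real^'n) set measure" where
  "grass_borel m = vimage_algebra (Grass m) projmat borel"

definition haar_grass :: "nat \<Rightarrow> (real^'n) set measure \<Rightarrow> bool" where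
  "haar_grass m M \<longleftrightarrow> prob_space M \<and> sets M = sets (grass_borel m) \<and>
     (\<forall>f. orthogonal_transformation f \<longrightarrow> distr M M (\<lambda>H. f ` H) = M)"

end

theory Submission
  imports Defs "HOL-Computational_Algebra.Polynomial"
begin

text \<open>
  Write \<open>Q\<close> for the orthogonal projection onto \<open>P\<close> and \<open>e\<^sub>i\<close> for \<open>axis (\<sigma> i) 1\<close>. The norms
  \<open>\<parallel>Q e\<^sub>i\<parallel>\<^sup>2 = \<langle>Q e\<^sub>i, e\<^sub>i\<rangle>\<close> for \<open>i < N\<close>, together with \<open>tr Q = N - d\<close>, give the whole diagonal of \<open>Q\<close>;
  polarisation then turns the norms \<open>\<parallel>Q (e\<^sub>j + e\<^sub>k)\<parallel>\<^sup>2\<close> into the columns \<open>Q e\<^sub>j\<close>, \<open>j \<le> d\<close>.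
  So every admissible \<open>H\<close> has the same projection as \<open>P\<close> on \<open>E = span {e\<^sub>1, \<dots>, e\<^sub>d}\<close>. If
  \<open>P \<inter> E = {0}\<close>, the residuals \<open>(I - Q) E\<close> form a \<open>d\<close>-dimensional space orthogonal to both
  \<open>P\<close> and \<open>H\<close>, i.e. the orthogonal complement of \<open>P\<close>, and hence \<open>H = P\<close>.

  It remains to see that \<open>P \<inter> E = {0}\<close> almost surely. By invariance of the Haar measure the
  event \<open>P \<inter> E' \<noteq> {0}\<close> has the same probability \<open>c\<close> for every \<open>d\<close>-dimensional \<open>E'\<close>. Take for
  \<open>E'\<close> the row spans \<open>E\<^sub>t\<close> (\<open>t \<in> \<nat>\<close>) of a Vandermonde-like matrix: for fixed \<open>P\<close>, a determinant
  that is a nonzero polynomial in \<open>t\<close> shows that \<open>P\<close> meets only finitely many \<open>E\<^sub>t\<close>. If \<open>c > 0\<close>,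
  some \<open>P\<close> would lie in infinitely many of these events, so \<open>c = 0\<close>.
\<close>

section \<open>Orthogonal projections\<close>

lemma orthogonal_foot_unique:
  fixes H :: "(real^'n) set"
  assumes "subspace H" "p \<in> H" "\<And>h. h \<in> H \<Longrightarrow> (y - p) \<bullet> h = 0"
    "q \<in> H" "\<And>h. h \<in> H \<Longrightarrow> (y - q) \<bullet> h = 0"
  shows "p = q"
proof -
  have "q - p \<in> H" using assms by (simp add: subspace_diff)
  then have "(q - p) \<bullet> (q - p) = (y - p) \<bullet> (q - p) - (y - q) \<bullet> (q - p)"
    by (simp add: inner_diff_left)
  also have "\<dots> = 0" using assms(3,5) \<open>q - p \<in> H\<close> by simp
  finally show ?thesis by simp
qed

lemma oproj_characterization:
  fixes H :: "(real^'n) set"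
  assumes "subspace H"
  shows "oproj H y \<in> H \<and> (\<forall>h\<in>H. (y - oproj H y) \<bullet> h = 0)"
proof -
  obtain a z where a: "a \<in> span H" and z: "\<And>w. w \<in> span H \<Longrightarrow> orthogonal z w" and yz: "y = a + z"
    using orthogonal_subspace_decomp_exists[of H y] by blast
  have sH: "span H = H" using assms by (simp add: span_eq_iff)
  have "a \<in> H \<and> (\<forall>h\<in>H. (y - a) \<bullet> h = 0)"
    using a z yz unfolding sH by (auto simp: orthogonal_def)
  then have "\<exists>!p. p \<in> H \<and> (\<forall>h\<in>H. (y - p) \<bullet> h = 0)"
    using orthogonal_foot_unique[OF assms] by blast
  then show ?thesis unfolding oproj_def by (rule theI')
qed

lemma oproj_in:
  fixes H :: "(real^'n) set"
  shows "subspace H \<Longrightarrow> oproj H y \<in> H"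
  using oproj_characterization by blast

lemma oproj_orthogonal:
  fixes H :: "(real^'n) set"
  shows "subspace H \<Longrightarrow> h \<in> H \<Longrightarrow> (y - oproj H y) \<bullet> h = 0"
  using oproj_characterization by blast

lemma oproj_unique:
  fixes H :: "(real^'n) set"
  assumes "subspace H" "p \<in> H" "\<And>h. h \<in> H \<Longrightarrow> (y - p) \<bullet> h = 0"
  shows "oproj H y = p"
  using orthogonal_foot_unique[OF assms(1) oproj_in oproj_orthogonal assms(2,3)] assms(1) by blast

lemma oproj_eq_self_iff:
  fixes H :: "(real^'n) set"
  assumes "subspace H"
  shows "oproj H v = v \<longleftrightarrow> v \<in> H"
  using oproj_in[OF assms, of v] oproj_unique[OF assms, of v v] by auto

lemma linear_oproj:
  fixes H :: "(real^'n) set"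
  assumes "subspace H"
  shows "linear (oproj H)"
proof (rule linearI)
  fix x y :: "real^'n" and c :: real
  show "oproj H (x + y) = oproj H x + oproj H y"
  proof (rule oproj_unique[OF assms])
    show "oproj H x + oproj H y \<in> H" using oproj_in[OF assms] assms by (simp add: subspace_add)
    fix h assume "h \<in> H"
    then show "(x + y - (oproj H x + oproj H y)) \<bullet> h = 0"
      using oproj_orthogonal[OF assms, of h x] oproj_orthogonal[OF assms, of h y]
      by (simp add: inner_diff_left inner_add_left)
  qed
  show "oproj H (c *\<^sub>R x) = c *\<^sub>R oproj H x"
  proof (rule oproj_unique[OF assms])
    show "c *\<^sub>R oproj H x \<in> H" using oproj_in[OF assms] assms by (simp add: subspace_scale)
    fix h assume "h \<in> H"
    then show "(c *\<^sub>R x - c *\<^sub>R oproj H x) \<bullet> h = 0"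
      using oproj_orthogonal[OF assms, of h x] by (simp add: inner_diff_left)
  qed
qed

lemma oproj_inner_oproj:
  fixes H :: "(real^'n) set"
  assumes "subspace H"
  shows "oproj H u \<bullet> v = oproj H u \<bullet> oproj H v"
proof -
  have "(v - oproj H v) \<bullet> oproj H u = 0" by (rule oproj_orthogonal[OF assms oproj_in[OF assms]])
  then have "v \<bullet> oproj H u = oproj H v \<bullet> oproj H u" by (simp add: inner_diff_left)
  then show ?thesis by (metis inner_commute)
qed

lemma oproj_inner_commute:
  fixes H :: "(real^'n) set"
  assumes "subspace H"
  shows "oproj H u \<bullet> v = oproj H v \<bullet> u"
  using oproj_inner_oproj[OF assms, of u v] oproj_inner_oproj[OF assms, of v u]
  by (simp add: inner_commute)

lemma oproj_norm_sq:
  fixes H :: "(real^'n) set"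
  assumes "subspace H"
  shows "(norm (oproj H y))\<^sup>2 = oproj H y \<bullet> y"
  using oproj_inner_oproj[OF assms, of y y] by (simp add: power2_norm_eq_inner)

lemma oproj_add_inner:
  fixes H :: "(real^'n) set"
  assumes "subspace H"
  shows "oproj H (u + v) \<bullet> (u + v) = oproj H u \<bullet> u + oproj H v \<bullet> v + 2 * (oproj H u \<bullet> v)"
  using oproj_inner_commute[OF assms, of v u]
  by (simp add: linear_add[OF linear_oproj[OF assms]] inner_add_left inner_add_right)

lemma oproj_orthonormal_expansion:
  fixes H :: "(real^'n) set"
  assumes "subspace H" "span B = H" "finite B" "pairwise orthogonal B" "\<And>u. u \<in> B \<Longrightarrow> norm u = 1"
  shows "oproj H y = (\<Sum>u\<in>B. (y \<bullet> u) *\<^sub>R u)"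
proof (rule oproj_unique[OF assms(1)])
  show "(\<Sum>u\<in>B. (y \<bullet> u) *\<^sub>R u) \<in> H"
    unfolding assms(2)[symmetric] by (intro span_sum span_mul span_base)
  have "(y - (\<Sum>u\<in>B. (y \<bullet> u) *\<^sub>R u)) \<bullet> w = 0" if "w \<in> B" for w
  proof -
    have "(\<Sum>u\<in>B. (y \<bullet> u) *\<^sub>R u) \<bullet> w = (\<Sum>u\<in>B. if u = w then y \<bullet> w else 0)"
      unfolding inner_sum_left
    proof (rule sum.cong)
      fix u assume "u \<in> B"
      then have "u \<bullet> w = (if u = w then 1 else 0)"
        using assms(4,5) that by (auto simp: pairwise_def orthogonal_def norm_eq_1)
      then show "(y \<bullet> u) *\<^sub>R u \<bullet> w = (if u = w then y \<bullet> w else 0)" by auto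
    qed simp
    then show ?thesis using assms(3) that by (simp add: inner_diff_left)
  qed
  then have "span B \<subseteq> {h. (y - (\<Sum>u\<in>B. (y \<bullet> u) *\<^sub>R u)) \<bullet> h = 0}"
    by (intro span_minimal) (auto simp: subspace_hyperplane)
  then show "(y - (\<Sum>u\<in>B. (y \<bullet> u) *\<^sub>R u)) \<bullet> h = 0" if "h \<in> H" for h
    using assms(2) that by blast
qed

lemma sum_oproj_axis_inner:
  fixes H :: "(real^'n) set"
  assumes "subspace H"
  shows "(\<Sum>j\<in>UNIV. oproj H (axis j 1) \<bullet> axis j 1) = real (dim H)"
proof -
  obtain B where B: "B \<subseteq> H" "pairwise orthogonal B" "\<And>x. x \<in> B \<Longrightarrow> norm x = 1"
    "independent B" "card B = dim H" "span B = H"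
    using orthonormal_basis_subspace[OF assms] by metis
  have fin: "finite B" using B(4) by (simp add: independent_imp_finite)
  have "oproj H (axis j 1) \<bullet> axis j 1 = (\<Sum>u\<in>B. u $ j * u $ j)" for j
    using oproj_orthonormal_expansion[OF assms B(6) fin B(2,3), of "axis j 1"]
    by (simp add: inner_sum_left inner_axis inner_axis' inner_real_def)
  then have "(\<Sum>j\<in>UNIV. oproj H (axis j 1) \<bullet> axis j 1) = (\<Sum>u\<in>B. \<Sum>j\<in>UNIV. u $ j * u $ j)"
    by (simp add: sum.swap[of _ UNIV])
  also have "\<dots> = (\<Sum>u\<in>B. 1)"
    using B(3) by (intro sum.cong) (simp_all add: norm_eq_1 inner_vec_def inner_real_def)
  also have "\<dots> = real (dim H)" using B(5) by simp
  finally show ?thesis .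
qed

section \<open>Recovering a subspace from projection norms\<close>

lemma oproj_axis_eq_of_norms_eq:
  fixes P H :: "(real^'n) set" and A :: "'n set"
  assumes sP: "subspace P" and sH: "subspace H" and dim_eq: "dim H = dim P"
    and diag: "\<And>c. c \<noteq> c0 \<Longrightarrow>
      (norm (oproj H (axis c 1)))\<^sup>2 = (norm (oproj P (axis c 1)))\<^sup>2"
    and pair: "\<And>a b. a \<in> A \<Longrightarrow> b \<noteq> a \<Longrightarrow>
      (norm (oproj H (axis a 1 + axis b 1)))\<^sup>2 = (norm (oproj P (axis a 1 + axis b 1)))\<^sup>2"
    and a: "a \<in> A"
  shows "oproj H (axis a 1) = oproj P (axis a 1)"
proof -
  define e where "e c = (axis c 1 :: real^'n)" for c
  have diag': "oproj H (e c) \<bullet> e c = oproj P (e c) \<bullet> e c" if "c \<noteq> c0" for c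
    using diag[OF that] by (simp add: e_def oproj_norm_sq[OF sP] oproj_norm_sq[OF sH])
  have "(\<Sum>c\<in>UNIV. oproj H (e c) \<bullet> e c) = (\<Sum>c\<in>UNIV. oproj P (e c) \<bullet> e c)"
    using sum_oproj_axis_inner[OF sP] sum_oproj_axis_inner[OF sH] dim_eq by (simp add: e_def)
  then have "oproj H (e c0) \<bullet> e c0 = oproj P (e c0) \<bullet> e c0"
    using diag' by (simp add: sum.remove[of UNIV c0])
  with diag' have diag_all: "oproj H (e c) \<bullet> e c = oproj P (e c) \<bullet> e c" for c
    by (cases "c = c0") auto
  have "oproj H (e a) \<bullet> e b = oproj P (e a) \<bullet> e b" for b
  proof (cases "b = a")
    case False
    have "oproj H (e a + e b) \<bullet> (e a + e b) = oproj P (e a + e b) \<bullet> (e a + e b)"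
      using pair[OF a False] by (simp add: e_def oproj_norm_sq[OF sP] oproj_norm_sq[OF sH])
    then show ?thesis using diag_all by (simp add: oproj_add_inner[OF sP] oproj_add_inner[OF sH])
  qed (simp add: diag_all)
  then show ?thesis by (simp add: vec_eq_iff cart_eq_inner_axis e_def)
qed

lemma subset_of_orthogonal_to_complement:
  fixes P W H :: "(real^'n) set"
  assumes sP: "subspace P" and sW: "subspace W" and dim_sum: "dim P + dim W = CARD('n)"
    and WP: "\<And>w p. w \<in> W \<Longrightarrow> p \<in> P \<Longrightarrow> w \<bullet> p = 0"
    and WH: "\<And>w h. w \<in> W \<Longrightarrow> h \<in> H \<Longrightarrow> w \<bullet> h = 0"
  shows "H \<subseteq> P"
proof
  fix x assume "x \<in> H"
  have "P \<inter> W \<subseteq> {0}" using WP by fastforce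
  then have "dim (P \<inter> W) = 0" by (simp add: dim_eq_0)
  then have "dim {p + w |p w. p \<in> P \<and> w \<in> W} = CARD('n)"
    using dim_sums_Int[OF sP sW] dim_sum by linarith
  then have "{p + w |p w. p \<in> P \<and> w \<in> W} = UNIV"
    by (intro subspace_dim_equal subspace_sums[OF sP sW]) auto
  then obtain p w where pw: "x = p + w" "p \<in> P" "w \<in> W" by blast
  have "w \<bullet> w = w \<bullet> x - w \<bullet> p" using pw(1) by (simp add: inner_add_right)
  also have "\<dots> = 0" using WH[OF pw(3) \<open>x \<in> H\<close>] WP[OF pw(3,2)] by simp
  finally show "x \<in> P" using pw by simp
qed

text \<open>The residuals \<open>v - P v\<close>, \<open>v \<in> E\<close>, are orthogonal to both \<open>P\<close> and \<open>H\<close> and, as \<open>E\<close> is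
  transversal to \<open>P\<close>, span an orthogonal complement of \<open>P\<close>.\<close>
lemma subspace_eq_of_oproj_eq_on_transversal:
  fixes P H E :: "(real^'n) set"
  assumes sP: "subspace P" and sH: "subspace H" and sE: "subspace E"
    and dim_eq: "dim H = dim P" and dim_sum: "dim P + dim E = CARD('n)"
    and agree: "\<And>v. v \<in> E \<Longrightarrow> oproj H v = oproj P v"
    and transversal: "\<And>v. v \<in> E \<Longrightarrow> v \<in> P \<Longrightarrow> v = 0"
  shows "H = P"
proof -
  define r where "r v = v - oproj P v" for v
  have lin: "linear r"
    unfolding r_def by (intro linear_compose_sub linear_ident linear_oproj[OF sP])
  have "inj_on r E"
  proof (rule inj_onI)
    fix x y assume xy: "x \<in> E" "y \<in> E" "r x = r y"
    then have "r (x - y) = 0" by (simp add: linear_diff[OF lin])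
    then have "oproj P (x - y) = x - y" by (simp add: r_def)
    then have "x - y \<in> P" by (simp add: oproj_eq_self_iff[OF sP])
    moreover have "x - y \<in> E" using xy sE by (simp add: subspace_diff)
    ultimately show "x = y" using transversal[of "x - y"] by simp
  qed
  moreover have "span E = E" using sE by (simp add: span_eq_iff)
  ultimately have "dim (r ` E) = dim E" using dim_image_eq[OF lin, of E] by metis
  moreover have "w \<bullet> p = 0" if "w \<in> r ` E" "p \<in> P" for w p
    using that oproj_orthogonal[OF sP] by (auto simp: r_def)
  moreover have "w \<bullet> h = 0" if "w \<in> r ` E" "h \<in> H" for w h
    using that oproj_orthogonal[OF sH] by (auto simp: r_def agree[symmetric])
  ultimately have "H \<subseteq> P"
    using subset_of_orthogonal_to_complement[OF sP linear_subspace_image[OF lin sE]] dim_sum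
    by presburger
  then show ?thesis using subspace_dim_equal[OF sH sP] dim_eq by simp
qed

lemma dim_span_axis_image:
  fixes \<sigma> :: "'i \<Rightarrow> 'n::finite"
  assumes "inj_on \<sigma> S" "finite S"
  shows "dim (span ((\<lambda>k. axis (\<sigma> k) (1::real)) ` S)) = card S"
proof -
  have "(\<lambda>k. axis (\<sigma> k) (1::real)) ` S \<subseteq> Basis" by (auto simp: Basis_vec_def)
  then have "independent ((\<lambda>k. axis (\<sigma> k) (1::real)) ` S)"
    by (rule independent_mono[OF independent_Basis])
  moreover have "inj_on (\<lambda>k. axis (\<sigma> k) (1::real)) S"
    using assms(1) by (auto simp: inj_on_def axis_eq_axis)
  ultimately show ?thesis by (simp add: dim_span dim_eq_card_independent card_image)
qed

lemma Grass_eq_of_projection_norms_eq: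
  fixes d :: nat and \<sigma> :: "nat \<Rightarrow> 'n::finite" and P H :: "(real^'n) set"
  assumes bij: "bij_betw \<sigma> {1..CARD('n)} UNIV" and dN: "d < CARD('n)"
    and PG: "P \<in> Grass (CARD('n) - d)" and HG: "H \<in> Grass (CARD('n) - d)"
    and transversal: "\<And>v. v \<in> span ((\<lambda>k. axis (\<sigma> k) 1) ` {1..d}) \<Longrightarrow> v \<in> P \<Longrightarrow> v = 0"
    and q1: "\<forall>i \<in> {1..CARD('n) - 1}.
            (norm (oproj H (axis (\<sigma> i) 1)))\<^sup>2 = (norm (oproj P (axis (\<sigma> i) 1)))\<^sup>2"
    and q2: "\<forall>j \<in> {1..d}. \<forall>k \<in> {j+1..CARD('n)}.
            (norm (oproj H (axis (\<sigma> j) 1 + axis (\<sigma> k) 1)))\<^sup>2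
              = (norm (oproj P (axis (\<sigma> j) 1 + axis (\<sigma> k) 1)))\<^sup>2"
  shows "H = P"
proof -
  let ?N = "CARD('n)" and ?E = "span ((\<lambda>k. axis (\<sigma> k) (1::real)) ` {1..d})"
  have sP: "subspace P" and sH: "subspace H" and dim_eq: "dim H = dim P"
    using PG HG by (auto simp: Grass_def)
  have inj: "inj_on \<sigma> {1..?N}" and surj: "c \<in> \<sigma> ` {1..?N}" for c
    using bij by (auto simp: bij_betw_def)
  have diag: "(norm (oproj H (axis c 1)))\<^sup>2 = (norm (oproj P (axis c 1)))\<^sup>2" if "c \<noteq> \<sigma> ?N" for c
  proof -
    obtain i where i: "i \<in> {1..?N}" "c = \<sigma> i" using surj by blast
    moreover have "i \<noteq> ?N" using i that by blast
    ultimately have "i \<in> {1..?N - 1}" by auto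
    then show ?thesis using q1 i(2) by blast
  qed
  have pair: "(norm (oproj H (axis a 1 + axis b 1)))\<^sup>2 = (norm (oproj P (axis a 1 + axis b 1)))\<^sup>2"
    if a: "a \<in> \<sigma> ` {1..d}" and ba: "b \<noteq> a" for a b
  proof -
    obtain j k where jk: "j \<in> {1..d}" "a = \<sigma> j" "k \<in> {1..?N}" "b = \<sigma> k"
      using a surj by blast
    then have "k \<noteq> j" using ba by blast
    then consider "j < k" | "k < j" by linarith
    then show ?thesis
    proof cases
      case 1 then show ?thesis using q2 jk by auto
    next
      case 2
      then have "k \<in> {1..d}" "j \<in> {k+1..?N}" using jk dN by auto
      then have "(norm (oproj H (axis (\<sigma> k) 1 + axis (\<sigma> j) 1)))\<^sup>2
          = (norm (oproj P (axis (\<sigma> k) 1 + axis (\<sigma> j) 1)))\<^sup>2" using q2 by blast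
      then show ?thesis using jk(2,4) by (simp add: add.commute)
    qed
  qed
  have "oproj H v = oproj P v" if "v \<in> (\<lambda>k. axis (\<sigma> k) 1) ` {1..d}" for v
    using oproj_axis_eq_of_norms_eq[OF sP sH dim_eq diag pair] that by auto
  then have agree: "oproj H v = oproj P v" if "v \<in> ?E" for v
    using linear_eq_on_span[OF linear_oproj[OF sH] linear_oproj[OF sP]] that by blast
  have "dim ?E = d"
    using dim_span_axis_image[OF inj_on_subset[OF inj]] dN by simp
  then have "dim P + dim ?E = ?N" using PG dN by (simp add: Grass_def)
  then show ?thesis
    using subspace_eq_of_oproj_eq_on_transversal[OF sP sH subspace_span dim_eq _ agree transversal]
    by blast
qed

section \<open>Subspaces in general position\<close>

lemma base_expansion_less:
  fixes a :: "nat \<Rightarrow> nat"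
  assumes "\<forall>k<n. a k < W"
  shows "(\<Sum>k<n. a k * W^k) < W^n"
  using assms
proof (induction n)
  case (Suc n)
  have "a n < W" using Suc.prems by blast
  then have "a n + 1 \<le> W" by simp
  then have bound: "(a n + 1) * W^n \<le> W * W^n" by (rule mult_right_mono) simp
  have "(\<Sum>k<Suc n. a k * W^k) < (a n + 1) * W^n" using Suc by simp
  also have "\<dots> \<le> W * W^n" by (rule bound)
  also have "\<dots> = W ^ Suc n" by simp
  finally show ?case .
qed simp

lemma base_expansion_inj:
  fixes a b :: "nat \<Rightarrow> nat"
  assumes "\<forall>k<n. a k < W" "\<forall>k<n. b k < W" "(\<Sum>k<n. a k * W^k) = (\<Sum>k<n. b k * W^k)"
  shows "\<forall>k<n. a k = b k"
  using assms
proof (induction n)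
  case (Suc n)
  have less: "(\<Sum>k<n. a k * W^k) < W^n" "(\<Sum>k<n. b k * W^k) < W^n"
    using Suc.prems(1,2) by (simp_all add: base_expansion_less)
  then have "W^n > 0" by linarith
  have eq: "(\<Sum>k<n. a k * W^k) + a n * W^n = (\<Sum>k<n. b k * W^k) + b n * W^n"
    using Suc.prems(3) by simp
  have "((\<Sum>k<n. a k * W^k) + a n * W^n) div W^n = a n"
      "((\<Sum>k<n. b k * W^k) + b n * W^n) div W^n = b n"
    using less \<open>W^n > 0\<close> by simp_all
  with eq have "a n = b n" by simp
  with eq have "(\<Sum>k<n. a k * W^k) = (\<Sum>k<n. b k * W^k)" by simp
  moreover have "\<forall>k<n. a k < W" "\<forall>k<n. b k < W" using Suc.prems(1,2) by simp_all
  ultimately have "\<forall>k<n. a k = b k" using Suc.IH by blast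
  with \<open>a n = b n\<close> show ?case by (simp add: less_Suc_eq)
qed simp

lemma base_expansion_index_inj:
  fixes \<nu> :: "'n::finite \<Rightarrow> nat"
  assumes \<nu>: "bij_betw \<nu> UNIV {..<CARD('n)}"
    and eq: "(\<Sum>i\<in>T. \<nu> (f i) * CARD('n) ^ \<nu> i) = (\<Sum>i\<in>T. \<nu> (g i) * CARD('n) ^ \<nu> i)"
    and i: "i \<in> T"
  shows "f i = g i"
proof -
  let ?W = "CARD('n)"
  define digit where "digit h k = (if inv \<nu> k \<in> T then \<nu> (h (inv \<nu> k)) else 0)" for h k
  have inv\<nu>: "inv \<nu> (\<nu> j) = j" for j
    using \<nu> by (simp add: bij_betw_def)
  have expansion: "(\<Sum>i\<in>T. \<nu> (h i) * ?W ^ \<nu> i) = (\<Sum>k<?W. digit h k * ?W ^ k)" for h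
  proof -
    have "(\<Sum>i\<in>T. \<nu> (h i) * ?W ^ \<nu> i) = (\<Sum>j\<in>UNIV. if j \<in> T then \<nu> (h j) * ?W ^ \<nu> j else 0)"
      by (simp add: sum.If_cases)
    also have "\<dots> = (\<Sum>j\<in>UNIV. digit h (\<nu> j) * ?W ^ \<nu> j)"
      by (intro sum.cong) (simp_all add: digit_def inv\<nu>)
    also have "\<dots> = (\<Sum>k<?W. digit h k * ?W ^ k)"
      by (rule sum.reindex_bij_betw[OF \<nu>])
    finally show ?thesis .
  qed
  have "digit h k < ?W" for h k
    using \<nu> by (auto simp: digit_def bij_betw_def)
  then have "\<forall>k<?W. digit f k = digit g k"
    using base_expansion_inj[of ?W "digit f" ?W "digit g"] eq by (simp add: expansion)
  moreover have "\<nu> i < ?W" using \<nu> by (auto simp: bij_betw_def)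
  ultimately have "\<nu> (f i) = \<nu> (g i)" using i by (auto simp: digit_def inv\<nu>)
  then show ?thesis using \<nu> by (simp add: bij_betw_def inj_eq)
qed

lemma det_nonzero_of_independent_rows:
  fixes r :: "'n::finite \<Rightarrow> real^'n"
  assumes "inj r" "independent (range r)"
  shows "det (\<chi> i. r i) \<noteq> 0"
proof -
  have "rows (\<chi> i. r i) = range r" by (auto simp: rows_def row_def)
  then have "rank (\<chi> i. r i) = CARD('n)"
    using assms by (simp add: row_rank_def dim_eq_card_independent card_image)
  then show ?thesis by (simp add: det_eq_0_rank)
qed

lemma det_nonzero_span_rows_complementary:
  fixes r :: "'n::finite \<Rightarrow> real^'n"
  assumes "det (\<chi> i. r i) \<noteq> 0"
  shows "span (r ` T) \<inter> span (r ` (- T)) = {0}" "dim (span (r ` T)) = card T"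
proof -
  have "rows (\<chi> i. r i) = range r" by (auto simp: rows_def row_def)
  moreover have "rank (\<chi> i. r i) \<le> CARD('n)" using rank_bound by (metis min.boundedE)
  ultimately have "dim (range r) = CARD('n)"
    using assms by (simp add: det_eq_0_rank row_rank_def)
  moreover have "range r = r ` T \<union> r ` (- T)" by auto
  ultimately have "dim {x + y |x y. x \<in> span (r ` T) \<and> y \<in> span (r ` (- T))} = CARD('n)"
    by (simp only: span_Un[symmetric] dim_span)
  then have sum: "CARD('n) + dim (span (r ` T) \<inter> span (r ` (- T)))
      = dim (span (r ` T)) + dim (span (r ` (- T)))"
    using dim_sums_Int[OF subspace_span[of "r ` T"] subspace_span[of "r ` (- T)"]] by linarith
  have "dim (span (r ` T)) \<le> card T" "dim (span (r ` (- T))) \<le> card (- T)"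
    using dim_le_card'[of "r ` T"] dim_le_card'[of "r ` (- T)"]
      card_image_le[of T r] card_image_le[of "- T" r] by simp_all
  moreover have "card T + card (- T) = card (T \<union> - T)"
    by (rule card_Un_disjoint[symmetric]) auto
  then have "card T + card (- T) = CARD('n)" by simp
  ultimately have "dim (span (r ` T) \<inter> span (r ` (- T))) = 0" "dim (span (r ` T)) = card T"
    using sum by linarith+
  then show "span (r ` T) \<inter> span (r ` (- T)) = {0}" "dim (span (r ` T)) = card T"
    by (auto simp: dim_eq_0 span_zero)
qed

lemma ex_axis_complement:
  fixes B :: "(real^'n) set"
  assumes "independent B"
  obtains J where "card J = CARD('n) - card B" "B \<inter> (\<lambda>j. axis j 1) ` J = {}"
    "independent (B \<union> (\<lambda>j. axis j 1) ` J)"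
proof -
  obtain B' where B': "B \<subseteq> B'" "B' \<subseteq> B \<union> Basis" "independent B'" "B \<union> Basis \<subseteq> span B'"
    using maximal_independent_subset_extend[of B "B \<union> Basis"] assms by blast
  have "span B' = UNIV" using B'(4) span_Basis span_minimal[of Basis "span B'"] by auto
  then have "card B' = CARD('n)"
    using dim_eq_card_independent[OF B'(3)] by (metis dim_UNIV dim_span DIM_cart DIM_real mult_1_right)
  define J where "J = {j. axis j (1::real) \<in> B' - B}"
  have axis_J: "(\<lambda>j. axis j 1) ` J = B' - B"
    using B'(2) by (auto simp: J_def Basis_vec_def)
  have "inj_on (\<lambda>j::'n. axis j (1::real)) J" by (auto simp: inj_on_def axis_eq_axis)
  then have "card J = card (B' - B)" by (metis axis_J card_image)
  also have "\<dots> = CARD('n) - card B"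
    using B'(1,3) \<open>card B' = CARD('n)\<close> by (simp add: card_Diff_subset independent_imp_finite finite_subset)
  finally show ?thesis
    using that axis_J B'(1,3) by (metis Diff_disjoint Un_Diff_cancel sup.absorb_iff2)
qed

lemma ex_axis_completion_det_nonzero:
  fixes R :: "'n::finite \<Rightarrow> real^'n"
  assumes inj: "inj_on R (- T)" and indep: "independent (R ` (- T))"
  obtains f where "\<forall>i. i \<notin> T \<longrightarrow> f i = i" "det (\<chi> i. if i \<in> T then axis (f i) 1 else R i) \<noteq> 0"
proof -
  obtain J where J: "card J = CARD('n) - card (R ` (- T))" "R ` (- T) \<inter> (\<lambda>j. axis j 1) ` J = {}"
    "independent (R ` (- T) \<union> (\<lambda>j. axis j 1) ` J)"
    using ex_axis_complement[OF indep] by blast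
  have "card T + card (- T) = card (T \<union> - T)"
    by (rule card_Un_disjoint[symmetric]) auto
  then have "card J = card T" using J(1) card_image[OF inj] by simp
  then obtain g where g: "bij_betw g T J"
    using finite_same_card_bij[of T J] by auto
  define f where "f i = (if i \<in> T then g i else i)" for i
  define r where "r i = (if i \<in> T then axis (f i) 1 else R i)" for i
  have r_image: "range r = R ` (- T) \<union> (\<lambda>j. axis j 1) ` J"
    using g by (auto simp: r_def f_def bij_betw_def image_iff)
  have mem: "r i \<in> (\<lambda>j. axis j 1) ` J \<longleftrightarrow> i \<in> T" for i
    using g J(2) by (auto simp: r_def f_def bij_betw_def)
  have "inj r"
  proof (rule injI)
    fix i k assume eq: "r i = r k"
    then have "i \<in> T \<longleftrightarrow> k \<in> T" using mem by metis
    then show "i = k"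
      using eq g inj by (auto simp: r_def f_def bij_betw_def inj_on_def axis_eq_axis split: if_splits)
  qed
  then have "det (\<chi> i. r i) \<noteq> 0"
    using det_nonzero_of_independent_rows J(3) r_image by metis
  then show ?thesis using that[of f] by (simp add: r_def f_def)
qed

text \<open>The exponents are \<open>N\<close>-adic numbers: in the Leibniz expansion of a determinant with rows
  \<open>moment_row \<nu> t i\<close>, \<open>i \<in> T\<close>, the exponent of \<open>t\<close> encodes the chosen column of every such row.\<close>
definition moment_row :: "('n::finite \<Rightarrow> nat) \<Rightarrow> real \<Rightarrow> 'n \<Rightarrow> real^'n" where
  "moment_row \<nu> t i = (\<chi> j. t ^ (\<nu> j * CARD('n) ^ \<nu> i))"

lemma det_moment_rows_expansion:
  fixes R :: "'n::finite \<Rightarrow> real^'n"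
  shows "det (\<chi> i. if i \<in> T then moment_row \<nu> t i else R i)
    = (\<Sum>f\<in>{f. \<forall>i. i \<notin> T \<longrightarrow> f i = i}. det (\<chi> i. if i \<in> T then axis (f i) 1 else R i)
        * t ^ (\<Sum>i\<in>T. \<nu> (f i) * CARD('n) ^ \<nu> i))"
proof -
  have row: "moment_row \<nu> t i = (\<Sum>j\<in>UNIV. t ^ (\<nu> j * CARD('n) ^ \<nu> i) *s axis j 1)" for i
  proof -
    have "moment_row \<nu> t i = (\<Sum>j\<in>UNIV. moment_row \<nu> t i $ j *s axis j 1)"
      by (rule basis_expansion[symmetric])
    also have "\<dots> = (\<Sum>j\<in>UNIV. t ^ (\<nu> j * CARD('n) ^ \<nu> i) *s axis j 1)"
      by (simp add: moment_row_def)
    finally show ?thesis .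
  qed
  have "det (\<chi> i. if i \<in> T then moment_row \<nu> t i else R i)
    = (\<Sum>f\<in>{f. \<forall>i. i \<notin> T \<longrightarrow> f i = i}.
        det (\<chi> i. if i \<in> T then t ^ (\<nu> (f i) * CARD('n) ^ \<nu> i) *s axis (f i) 1 else R i))"
    unfolding row
    using det_linear_rows_sum_lemma[of UNIV T "\<lambda>i j. t ^ (\<nu> j * CARD('n) ^ \<nu> i) *s axis j 1" R]
    by simp
  also have "\<dots> = (\<Sum>f\<in>{f. \<forall>i. i \<notin> T \<longrightarrow> f i = i}. det (\<chi> i. if i \<in> T then axis (f i) 1 else R i)
        * t ^ (\<Sum>i\<in>T. \<nu> (f i) * CARD('n) ^ \<nu> i))"
  proof (rule sum.cong)
    fix f :: "'n \<Rightarrow> 'n"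
    have "(\<chi> i. if i \<in> T then t ^ (\<nu> (f i) * CARD('n) ^ \<nu> i) *s axis (f i) 1 else R i)
        = (\<chi> i. (if i \<in> T then t ^ (\<nu> (f i) * CARD('n) ^ \<nu> i) else 1)
                *s (if i \<in> T then axis (f i) 1 else R i))"
      by (rule Cart_lambda_cong) simp
    moreover have "(\<Prod>i\<in>UNIV. if i \<in> T then t ^ (\<nu> (f i) * CARD('n) ^ \<nu> i) else 1)
        = t ^ (\<Sum>i\<in>T. \<nu> (f i) * CARD('n) ^ \<nu> i)"
      by (simp add: prod.If_cases power_sum)
    ultimately show "det (\<chi> i. if i \<in> T then t ^ (\<nu> (f i) * CARD('n) ^ \<nu> i) *s axis (f i) 1 else R i)
        = det (\<chi> i. if i \<in> T then axis (f i) 1 else R i) * t ^ (\<Sum>i\<in>T. \<nu> (f i) * CARD('n) ^ \<nu> i)"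
      by (simp add: det_rows_mul mult.commute)
  qed simp
  finally show ?thesis .
qed

text \<open>Distinct \<open>f\<close> give distinct exponents, so the nonzero coefficient provided by
  \<open>ex_axis_completion_det_nonzero\<close> cannot cancel.\<close>
lemma det_moment_rows_nonzero_poly:
  fixes R :: "'n::finite \<Rightarrow> real^'n" and \<nu> :: "'n \<Rightarrow> nat"
  assumes \<nu>: "bij_betw \<nu> UNIV {..<CARD('n)}"
    and inj: "inj_on R (- T)" and indep: "independent (R ` (- T))"
  obtains q where "q \<noteq> 0" "\<And>t. det (\<chi> i. if i \<in> T then moment_row \<nu> t i else R i) = poly q t"
proof -
  define F where "F = {f :: 'n \<Rightarrow> 'n. \<forall>i. i \<notin> T \<longrightarrow> f i = i}"
  define D where "D f = det (\<chi> i. if i \<in> T then axis (f i) 1 else R i)" for f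
  define ex where "ex f = (\<Sum>i\<in>T. \<nu> (f i) * CARD('n) ^ \<nu> i)" for f
  define q where "q = (\<Sum>f\<in>F. monom (D f) (ex f))"
  have ex_inj: "f = g" if fg: "f \<in> F" "g \<in> F" "ex f = ex g" for f g
  proof
    fix i show "f i = g i"
      using fg base_expansion_index_inj[OF \<nu>, where T=T and f=f and g=g and i=i] by (cases "i \<in> T") (auto simp: F_def ex_def)
  qed
  obtain f0 where f0: "f0 \<in> F" "D f0 \<noteq> 0"
    using ex_axis_completion_det_nonzero[OF inj indep] unfolding F_def D_def by blast
  have "coeff q (ex f0) = (\<Sum>f\<in>F. if f = f0 then D f else 0)"
    unfolding q_def coeff_sum using ex_inj f0(1) by (intro sum.cong) (auto simp: coeff_monom)
  also have "\<dots> = D f0" using f0(1) by simp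
  finally have "q \<noteq> 0" using f0(2) by auto
  moreover have "det (\<chi> i. if i \<in> T then moment_row \<nu> t i else R i) = poly q t" for t
    by (simp add: q_def poly_sum poly_monom det_moment_rows_expansion F_def D_def ex_def)
  ultimately show ?thesis using that by blast
qed

lemma finite_nontransversal_moment_spans:
  fixes \<nu> :: "'n::finite \<Rightarrow> nat" and P :: "(real^'n) set" and T :: "'n set"
  assumes \<nu>: "bij_betw \<nu> UNIV {..<CARD('n)}" and sP: "subspace P"
    and dim_sum: "dim P + card T = CARD('n)"
  shows "finite {t. dim (span (moment_row \<nu> t ` T)) \<noteq> card T \<or> P \<inter> span (moment_row \<nu> t ` T) \<noteq> {0}}"
proof -
  obtain B where B: "B \<subseteq> P" "independent B" "P \<subseteq> span B" "card B = dim P"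
    using basis_exists[of P] by blast
  have "card T + card (- T) = card (T \<union> - T)"
    by (rule card_Un_disjoint[symmetric]) auto
  then have "card (- T) = card B" using B(4) dim_sum by simp
  then obtain b where b: "bij_betw b (- T) B"
    using finite_same_card_bij[of "- T" B] B(2) by (auto simp: independent_imp_finite)
  then have "inj_on b (- T)" "independent (b ` (- T))"
    using B(2) by (auto simp: bij_betw_def)
  then obtain q where q: "q \<noteq> 0" "\<And>t. det (\<chi> i. if i \<in> T then moment_row \<nu> t i else b i) = poly q t"
    using det_moment_rows_nonzero_poly[OF \<nu>] by metis
  have "span B = P" using span_subspace[OF B(1,3) sP] .
  have transversal: "dim (span (moment_row \<nu> t ` T)) = card T \<and> P \<inter> span (moment_row \<nu> t ` T) = {0}"
    if "poly q t \<noteq> 0" for t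
  proof -
    define r where "r i = (if i \<in> T then moment_row \<nu> t i else b i)" for i
    have "det (\<chi> i. r i) \<noteq> 0" using that q(2) by (simp add: r_def)
    moreover have "r ` T = moment_row \<nu> t ` T" "r ` (- T) = B"
      using b by (auto simp: r_def bij_betw_def image_iff)
    ultimately show ?thesis
      using det_nonzero_span_rows_complementary[of r T] \<open>span B = P\<close> by (auto simp: Int_commute)
  qed
  have "finite {t. poly q t = 0}" by (rule poly_roots_finite[OF q(1)])
  then show ?thesis by (rule rev_finite_subset) (use transversal in auto)
qed

section \<open>Subspaces meeting a fixed subspace form a Haar null set\<close>

definition Grass_meeting :: "nat \<Rightarrow> (real^'n) set \<Rightarrow> (real^'n) set set" where
  "Grass_meeting m E = {H \<in> Grass m. H \<inter> E \<noteq> {0}}"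

lemma closed_matrices_fixing_point:
  fixes S :: "(real^'n) set"
  assumes "compact S"
  shows "closed {A::real^'n^'n. \<exists>v\<in>S. A *v v = v}"
proof -
  have "continuous_on UNIV (\<lambda>p::(real^'n) \<times> (real^'n^'n). snd p *v fst p)"
    unfolding matrix_vector_mult_def
    by (intro continuous_on_vec_lambda continuous_on_sum continuous_on_mult continuous_on_component
        continuous_on_fst continuous_on_snd continuous_on_id)
  then have "closed {p::(real^'n) \<times> (real^'n^'n). snd p *v fst p = fst p}"
    by (rule closed_Collect_eq[OF _ continuous_on_fst[OF continuous_on_id]])
  then have "closed {A. \<exists>v. v \<in> S \<and> (v, A) \<in> {p::(real^'n) \<times> (real^'n^'n). snd p *v fst p = fst p}}"
    by (rule closed_compact_projection[OF assms])
  then show ?thesis by (simp add: Bex_def)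
qed

lemma projmat_mult:
  fixes H :: "(real^'n) set"
  assumes "subspace H"
  shows "projmat H *v v = oproj H v"
proof -
  have "projmat H = matrix (oproj H)" unfolding projmat_def matrix_def by simp
  moreover have "Vector_Spaces.linear (*s) (*s) (oproj H)"
    using linear_oproj[OF assms] by (simp add: linear_matrix_vector_mul_eq)
  ultimately show ?thesis by (simp add: matrix_works)
qed

lemma Grass_meeting_in_grass_borel:
  fixes E :: "(real^'n) set"
  assumes sE: "subspace E"
  shows "Grass_meeting m E \<in> sets (grass_borel m)"
proof -
  define C where "C = {A::real^'n^'n. \<exists>v\<in>E \<inter> sphere 0 1. A *v v = v}"
  have "closed C"
    unfolding C_def using closed_subspace[OF sE]
    by (intro closed_matrices_fixing_point closed_Int_compact compact_sphere)
  have "Grass_meeting m E = projmat -` C \<inter> Grass m"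
  proof (intro set_eqI iffI)
    fix H assume H: "H \<in> Grass_meeting m E"
    then have sH: "subspace H" by (simp add: Grass_meeting_def Grass_def)
    obtain v where v: "v \<noteq> 0" "v \<in> H" "v \<in> E"
      using H subspace_0[OF sH] subspace_0[OF sE] by (auto simp: Grass_meeting_def)
    define w where "w = (1 / norm v) *\<^sub>R v"
    have "w \<in> H" "w \<in> E" "norm w = 1"
      using v sH sE by (simp_all add: w_def subspace_scale)
    then have "projmat H \<in> C"
      using projmat_mult[OF sH] oproj_eq_self_iff[OF sH] by (auto simp: C_def)
    then show "H \<in> projmat -` C \<inter> Grass m" using H by (simp add: Grass_meeting_def)
  next
    fix H assume H: "H \<in> projmat -` C \<inter> Grass m"
    then have sH: "subspace H" by (simp add: Grass_def)
    obtain v where "v \<in> E" "norm v = 1" "projmat H *v v = v" using H by (auto simp: C_def)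
    then have "v \<in> H \<inter> E" "v \<noteq> 0"
      using projmat_mult[OF sH] oproj_eq_self_iff[OF sH] by auto
    then show "H \<in> Grass_meeting m E" using H by (auto simp: Grass_meeting_def)
  qed
  then show ?thesis
    unfolding grass_borel_def using in_vimage_algebra[OF borel_closed[OF \<open>closed C\<close>]] by simp
qed

lemma preimage_Grass_meeting_image:
  fixes g :: "real^'n \<Rightarrow> real^'n"
  assumes lin: "linear g" and inj: "inj g"
  shows "(\<lambda>H. g ` H) -` Grass_meeting m (g ` E) \<inter> Grass m = Grass_meeting m E"
proof -
  have Grass: "g ` H \<in> Grass m" if "H \<in> Grass m" for H
    using that linear_subspace_image[OF lin] dim_image_eq[OF lin inj_on_subset[OF inj subset_UNIV]]
    by (simp add: Grass_def)
  have "g ` H \<inter> g ` E \<noteq> {0} \<longleftrightarrow> H \<inter> E \<noteq> {0}" for H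
  proof -
    have "g ` H \<inter> g ` E = g ` (H \<inter> E)" using inj by (simp add: image_Int)
    moreover have "g ` X = {0} \<longleftrightarrow> X = {0}" for X
      using inj linear_0[OF lin] by (metis image_empty image_insert inj_image_eq_iff)
    ultimately show ?thesis by simp
  qed
  then show ?thesis using Grass by (auto simp: Grass_meeting_def)
qed

lemma emeasure_preimage_of_distr_eq:
  assumes "distr M M f = M" "emeasure M (space M) \<noteq> 0" "A \<in> sets M"
  shows "emeasure M (f -` A \<inter> space M) = emeasure M A"
proof -
  define \<mu>' where "\<mu>' B = emeasure M (f -` B \<inter> space M)" for B
  have e: "emeasure M X = (if X \<in> sigma_sets (space M) (sets M) \<and>
      measure_space (space M) (sigma_sets (space M) (sets M)) \<mu>' then \<mu>' X else 0)" for X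
  proof -
    have "emeasure M X = emeasure (distr M M f) X" using assms(1) by simp
    then show ?thesis unfolding distr_def emeasure_measure_of_conv \<mu>'_def by simp
  qed
  have "space M \<in> sigma_sets (space M) (sets M)" by (rule sigma_sets.Basic) simp
  then have "measure_space (space M) (sigma_sets (space M) (sets M)) \<mu>'"
    using e[of "space M"] assms(2) by (auto split: if_splits)
  moreover have "A \<in> sigma_sets (space M) (sets M)" by (rule sigma_sets.Basic[OF assms(3)])
  ultimately show ?thesis using e[of A] unfolding \<mu>'_def by simp
qed

lemma ex_orthogonal_transformation_image:
  fixes S T :: "(real^'n) set"
  assumes sS: "subspace S" and sT: "subspace T" and dim_eq: "dim S = dim T"
  obtains g where "orthogonal_transformation g" "g ` S = T"
proof -
  have "dim (orthogonal_comp S) + dim S = dim (UNIV :: (real^'n) set)"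
    "dim (orthogonal_comp T) + dim T = dim (UNIV :: (real^'n) set)"
    using dim_subspace_orthogonal_to_vectors[OF sS subspace_UNIV subset_UNIV]
      dim_subspace_orthogonal_to_vectors[OF sT subspace_UNIV subset_UNIV]
    by (simp_all add: orthogonal_comp_def)
  then have dim_comp: "dim (orthogonal_comp S) = dim (orthogonal_comp T)" using dim_eq by simp
  obtain f1 where f1: "linear f1" "f1 ` S = T" "\<And>x. x \<in> S \<Longrightarrow> norm (f1 x) = norm x"
    using isometries_subspaces[OF sS sT dim_eq] by metis
  obtain f2 where f2: "linear f2" "f2 ` orthogonal_comp S = orthogonal_comp T"
      "\<And>x. x \<in> orthogonal_comp S \<Longrightarrow> norm (f2 x) = norm x"
    using isometries_subspaces[OF subspace_orthogonal_comp subspace_orthogonal_comp dim_comp] by metis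
  define g where "g x = f1 (oproj S x) + f2 (x - oproj S x)" for x
  have lS: "linear (oproj S)" by (rule linear_oproj[OF sS])
  have "linear g"
    unfolding g_def
    by (rule linearI) (simp_all add: linear_add[OF lS] linear_cmul[OF lS] linear_add[OF f1(1)]
        linear_cmul[OF f1(1)] linear_add[OF f2(1)] linear_cmul[OF f2(1)] linear_diff[OF f2(1)] algebra_simps)
  moreover have "norm (g x) = norm x" for x
  proof -
    define a b where "a = oproj S x" and "b = x - oproj S x"
    have "a \<in> S" "b \<in> orthogonal_comp S"
      using oproj_in[OF sS] oproj_orthogonal[OF sS]
      by (auto simp: a_def b_def orthogonal_comp_def orthogonal_def inner_commute)
    then have "orthogonal (f1 a) (f2 b)" "orthogonal a b"
      using f1(2) f2(2) by (auto simp: orthogonal_comp_def)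
    have "g x = f1 a + f2 b" by (simp add: g_def a_def b_def)
    then have "(norm (g x))\<^sup>2 = (norm (f1 a))\<^sup>2 + (norm (f2 b))\<^sup>2"
      using norm_add_Pythagorean \<open>orthogonal (f1 a) (f2 b)\<close> by simp
    also have "\<dots> = (norm a)\<^sup>2 + (norm b)\<^sup>2"
      using f1(3)[OF \<open>a \<in> S\<close>] f2(3)[OF \<open>b \<in> orthogonal_comp S\<close>] by simp
    also have "\<dots> = (norm (a + b))\<^sup>2"
      using norm_add_Pythagorean[OF \<open>orthogonal a b\<close>] by simp
    finally show ?thesis by (simp add: a_def b_def)
  qed
  ultimately have "orthogonal_transformation g" by (simp add: orthogonal_transformation)
  moreover have "g ` S = f1 ` S"
    using oproj_eq_self_iff[OF sS] linear_0[OF f2(1)] by (force simp: g_def)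
  ultimately show ?thesis using that f1(2) by simp
qed

lemma haar_grass_emeasure_Grass_meeting_eq:
  fixes E E' :: "(real^'n) set"
  assumes M: "haar_grass m M" and sE: "subspace E" and sE': "subspace E'" and "dim E' = dim E"
  shows "emeasure M (Grass_meeting m E') = emeasure M (Grass_meeting m E)"
proof -
  obtain g where g: "orthogonal_transformation g" "g ` E' = E"
    using ex_orthogonal_transformation_image[OF sE' sE] assms(4) by blast
  have sets: "sets M = sets (grass_borel m)" using M by (simp add: haar_grass_def)
  then have "space M = Grass m" using sets_eq_imp_space_eq[OF sets] by (simp add: grass_borel_def)
  have "emeasure M (space M) \<noteq> 0"
    using M prob_space.emeasure_space_1 by (force simp: haar_grass_def)
  then have "emeasure M ((\<lambda>H. g ` H) -` Grass_meeting m E \<inter> space M) = emeasure M (Grass_meeting m E)"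
    using M Grass_meeting_in_grass_borel[OF sE] sets
    by (intro emeasure_preimage_of_distr_eq) (auto simp: haar_grass_def g(1))
  moreover have "(\<lambda>H. g ` H) -` Grass_meeting m E \<inter> space M = Grass_meeting m E'"
    using preimage_Grass_meeting_image[of g m E'] g \<open>space M = Grass m\<close>
    by (simp add: orthogonal_transformation_linear orthogonal_transformation_inj)
  ultimately show ?thesis by simp
qed

lemma (in finite_measure) ex_mem_infinitely_many:
  fixes A :: "nat \<Rightarrow> 'a set"
  assumes I: "infinite I" and A: "\<And>t. t \<in> I \<Longrightarrow> A t \<in> sets M"
    and c: "\<And>t. t \<in> I \<Longrightarrow> c \<le> measure M (A t)" "0 < c"
  obtains x where "infinite {t \<in> I. x \<in> A t}"
proof -
  define tail where "tail n = (\<Union>t\<in>{t\<in>I. n \<le> t}. A t)" for n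
  have tail_sets: "tail n \<in> sets M" for n
    unfolding tail_def using A by (intro sets.countable_UN') auto
  have "c \<le> measure M (tail n)" for n
  proof -
    obtain t where "t \<in> I" "n \<le> t" using I by (meson infinite_nat_iff_unbounded_le)
    then show ?thesis
      using c(1) finite_measure_mono[of "A t" "tail n"] tail_sets by (force simp: tail_def)
  qed
  moreover have "(\<lambda>n. measure M (tail n)) \<longlonglongrightarrow> measure M (\<Inter>n. tail n)"
    using tail_sets by (intro finite_Lim_measure_decseq) (auto simp: decseq_def tail_def)
  ultimately have "c \<le> measure M (\<Inter>n. tail n)" by (intro LIMSEQ_le_const) auto
  then have "(\<Inter>n. tail n) \<noteq> {}" using c(2) by auto
  then obtain x where "x \<in> tail n" for n by blast
  then have "infinite {t \<in> I. x \<in> A t}"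
    unfolding infinite_nat_iff_unbounded_le tail_def by blast
  then show ?thesis by (rule that)
qed

lemma haar_grass_Grass_meeting_null:
  fixes E :: "(real^'n) set"
  assumes M: "haar_grass m M" and sE: "subspace E" and dim_sum: "m + dim E = CARD('n)"
  shows "emeasure M (Grass_meeting m E) = 0"
proof (rule ccontr)
  assume nonzero: "emeasure M (Grass_meeting m E) \<noteq> 0"
  interpret prob_space M using M by (simp add: haar_grass_def)
  obtain \<nu> :: "'n \<Rightarrow> nat" where \<nu>: "bij_betw \<nu> UNIV {..<CARD('n)}"
    using ex_bij_betw_finite_nat[of "UNIV :: 'n set"] by (auto simp: atLeast0LessThan)
  obtain T :: "'n set" where T: "card T = dim E"
    using obtain_subset_with_card_n[of "dim E" "UNIV :: 'n set"] dim_sum by auto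
  define F where "F t = span (moment_row \<nu> (real t) ` T)" for t :: nat
  define good where "good = {t. dim (F t) = dim E}"
  have sets: "Grass_meeting m (F t) \<in> sets M" for t
    using M Grass_meeting_in_grass_borel[OF subspace_span] by (simp add: haar_grass_def F_def)
  have measure_eq: "measure M (Grass_meeting m (F t)) = measure M (Grass_meeting m E)" if "t \<in> good" for t
    using haar_grass_emeasure_Grass_meeting_eq[OF M sE subspace_span] that
    by (simp add: good_def F_def measure_def)
  have finite_bad: "finite {t. t \<notin> good \<or> H \<in> Grass_meeting m (F t)}" if "H \<in> Grass m" for H
  proof -
    let ?bad = "{t::real. dim (span (moment_row \<nu> t ` T)) \<noteq> card T
                  \<or> H \<inter> span (moment_row \<nu> t ` T) \<noteq> {0}}"
    have "finite ?bad"
      using that dim_sum T by (intro finite_nontransversal_moment_spans[OF \<nu>]) (auto simp: Grass_def)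
    then have "finite (real -` ?bad)" by (rule finite_vimageI) (simp add: inj_on_def)
    then show ?thesis by (rule rev_finite_subset) (auto simp: good_def F_def T Grass_meeting_def)
  qed
  have "Grass_meeting m E \<noteq> {}" using nonzero by auto
  then obtain H0 where "H0 \<in> Grass_meeting m E" by blast
  then have "H0 \<in> Grass m" by (simp add: Grass_meeting_def)
  then have "infinite (UNIV - {t. t \<notin> good \<or> H0 \<in> Grass_meeting m (F t)})"
    using finite_bad by (simp add: Diff_infinite_finite)
  then have "infinite good" by (rule infinite_super[rotated]) blast
  moreover have "0 < measure M (Grass_meeting m E)"
    using nonzero by (simp add: emeasure_eq_measure zero_less_measure_iff)
  ultimately obtain H where H: "infinite {t \<in> good. H \<in> Grass_meeting m (F t)}"
    using ex_mem_infinitely_many[of good "\<lambda>t. Grass_meeting m (F t)"] sets measure_eq by force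
  then obtain t where "H \<in> Grass_meeting m (F t)" using not_finite_existsD by blast
  then have "H \<in> Grass m" by (simp add: Grass_meeting_def)
  from finite_bad[OF this] have "finite {t \<in> good. H \<in> Grass_meeting m (F t)}"
    by (rule rev_finite_subset) blast
  with H show False by contradiction
qed

lemma AE_pair_measure_of_null_fst:
  assumes N: "sigma_finite_measure N" and Z: "Z \<in> null_sets M"
    and Q: "\<And>x y. x \<in> space M \<Longrightarrow> x \<notin> Z \<Longrightarrow> Q x y"
  shows "AE (x, y) in M \<Otimes>\<^sub>M N. Q x y"
proof (rule AE_I')
  have "emeasure (M \<Otimes>\<^sub>M N) (Z \<times> space N) = emeasure M Z * emeasure N (space N)"
    using Z by (intro sigma_finite_measure.emeasure_pair_measure_Times[OF N]) auto
  then show "Z \<times> space N \<in> null_sets (M \<Otimes>\<^sub>M N)"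
    using Z by (intro null_setsI) (auto intro: pair_measureI)
  show "{p \<in> space (M \<Otimes>\<^sub>M N). \<not> (case p of (x, y) \<Rightarrow> Q x y)} \<subseteq> Z \<times> space N"
    using Q by (auto simp: space_pair_measure)
qed

theorem corollary4p6:
  fixes d :: nat and \<sigma> :: "nat \<Rightarrow> 'n::finite"
    and M :: "(real^'n) set measure" and \<mu> :: "(real^'n) measure"
  assumes "1 \<le> d" and "d < CARD('n)"
    and "bij_betw \<sigma> {1..CARD('n)} UNIV"
    and "haar_grass (CARD('n) - d) M"
    and "prob_space \<mu>" and "sets \<mu> = sets borel" and "absolutely_continuous lborel \<mu>"
  shows "AE (P, x) in M \<Otimes>\<^sub>M \<mu>.
     (\<forall>H \<in> Grass (CARD('n) - d).
        ((\<forall>i \<in> {1..CARD('n) - 1}.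
            (norm (oproj H (axis (\<sigma> i) 1)))\<^sup>2 = (norm (oproj P (axis (\<sigma> i) 1)))\<^sup>2)
         \<and> (\<forall>j \<in> {1..d}. \<forall>k \<in> {j+1..CARD('n)}.
            (norm (oproj H (axis (\<sigma> j) 1 + axis (\<sigma> k) 1)))\<^sup>2
              = (norm (oproj P (axis (\<sigma> j) 1 + axis (\<sigma> k) 1)))\<^sup>2)
         \<and> (norm (oproj H x))\<^sup>2 = (norm (oproj P x))\<^sup>2)
        \<longrightarrow> H = P)"
proof -
  let ?m = "CARD('n) - d" and ?E = "span ((\<lambda>k. axis (\<sigma> k) (1::real)) ` {1..d})"
  have "dim ?E = d"
    using dim_span_axis_image[OF inj_on_subset[OF bij_betw_imp_inj_on[OF assms(3)]]] assms(2) by simp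
  then have "emeasure M (Grass_meeting ?m ?E) = 0"
    using haar_grass_Grass_meeting_null[OF assms(4) subspace_span] assms(2) by simp
  moreover have "sets M = sets (grass_borel ?m)" using assms(4) by (simp add: haar_grass_def)
  ultimately have null: "Grass_meeting ?m ?E \<in> null_sets M"
    using Grass_meeting_in_grass_borel[OF subspace_span] by auto
  have "space M = Grass ?m"
    using sets_eq_imp_space_eq[OF \<open>sets M = _\<close>] by (simp add: grass_borel_def)
  then show ?thesis
    using Grass_eq_of_projection_norms_eq[OF assms(3,2)]
    by (intro AE_pair_measure_of_null_fst[OF prob_space_imp_sigma_finite[OF assms(5)] null])
      (auto simp: Grass_meeting_def)
qed

end
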